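(* Let $\mathcal H$ be a separable Hilbert space and $\mathcal K$ a Hilbert space of finite dimension $d$ with orthonormal basis $\{|n\rangle\}_{n=1}^d$. A channel $\mathcal F\in\mathcal C(\mathcal K;\mathcal H)$ lies on the boundary $\partial\mathcal C(\mathcal K;\mathcal H)$ if and only if its Choi operator $$E(\mathcal F)=d\sum_{m,n=1}^d|m\rangle\langle n|\otimes\mathcal F(|m\rangle\langle n|)\in\mathcal L(\mathcal K\otimes\mathcal H)$$ has $0$ in its spectrum.
   Context: $\mathcal C(\mathcal K;\mathcal H)$ denotes the convex set of normal unital completely positive linear maps $\mathcal L(\mathcal K)\to\mathcal L(\mathcal H)$ (channels in the Heisenberg picture). For elements of a convex set $Z$, $x\leq_C y$ means $y=tx+(1-t)z$ for some $z\in Z$ and $0<t\leq 1$; the boundary $\partial Z$ is the set of $y\in Z$ for which some $x\in Z$ has $x\not\leq_C y$. *)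

theory Defs
  imports "HOL-Analysis.Analysis" "HOL-Library.Complex_Order"
begin

class complex_hilbert = real_normed_vector + complete_space +
  fixes scaleC :: "complex \<Rightarrow> 'a \<Rightarrow> 'a" (infixr \<open>*\<^sub>C\<close> 75)
    and cinner :: "'a \<Rightarrow> 'a \<Rightarrow> complex"
  assumes scaleC_add_right: "a *\<^sub>C (x + y) = a *\<^sub>C x + a *\<^sub>C y"
    and scaleC_add_left: "(a + b) *\<^sub>C x = a *\<^sub>C x + b *\<^sub>C x"
    and scaleC_scaleC: "a *\<^sub>C (b *\<^sub>C x) = (a * b) *\<^sub>C x"
    and scaleC_one: "1 *\<^sub>C x = x"
    and scaleR_scaleC: "r *\<^sub>R x = complex_of_real r *\<^sub>C x"
    and cinner_commute: "cinner y x = cnj (cinner x y)"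
    and cinner_add_right: "cinner x (y + z) = cinner x y + cinner x z"
    and cinner_scaleC_right: "cinner x (a *\<^sub>C y) = a * cinner x y"
    and cinner_ge_zero: "0 \<le> Re (cinner x x)"
    and cinner_eq_zero_iff: "cinner x x = 0 \<longleftrightarrow> x = 0"
    and norm_eq_sqrt_cinner: "norm x = sqrt (Re (cinner x x))"

instantiation complex :: complex_hilbert
begin
definition scaleC_complex :: "complex \<Rightarrow> complex \<Rightarrow> complex" where
  "scaleC_complex a x = a * x"
definition cinner_complex :: "complex \<Rightarrow> complex \<Rightarrow> complex" where
  "cinner_complex x y = cnj x * y"
instance
proof
  fix x y z a b :: complex and r :: real
  show "a *\<^sub>C (x + y) = a *\<^sub>C x + a *\<^sub>C y" by (simp add: scaleC_complex_def algebra_simps)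
  show "(a + b) *\<^sub>C x = a *\<^sub>C x + b *\<^sub>C x" by (simp add: scaleC_complex_def algebra_simps)
  show "a *\<^sub>C (b *\<^sub>C x) = (a * b) *\<^sub>C x" by (simp add: scaleC_complex_def algebra_simps)
  show "1 *\<^sub>C x = x" by (simp add: scaleC_complex_def)
  show "r *\<^sub>R x = complex_of_real r *\<^sub>C x" by (simp add: scaleC_complex_def scaleR_conv_of_real)
  show "cinner y x = cnj (cinner x y)" by (simp add: cinner_complex_def mult.commute)
  show "cinner x (y + z) = cinner x y + cinner x z" by (simp add: cinner_complex_def algebra_simps)
  show "cinner x (a *\<^sub>C y) = a * cinner x y" by (simp add: cinner_complex_def scaleC_complex_def algebra_simps)
  show "0 \<le> Re (cinner x x)" by (simp add: cinner_complex_def)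
  show "(cinner x x = 0) = (x = 0)" by (simp add: cinner_complex_def)
  show "norm x = sqrt (Re (cinner x x))"
    by (simp add: cinner_complex_def cmod_def power2_eq_square)
qed
end

text \<open>Finite orthogonal direct sums \<open>'a^'n\<close> (this models \<open>\<complex>^d \<otimes> H \<cong> H^d\<close>,
and \<open>complex^'n\<close> models \<open>\<complex>^d\<close>); the norm of \<open>vec\<close> is already the \<open>\<ell>\<^sup>2\<close> norm.\<close>

instantiation vec :: (complex_hilbert, finite) complex_hilbert
begin
definition scaleC_vec :: "complex \<Rightarrow> 'a^'b \<Rightarrow> 'a^'b" where
  "scaleC_vec a x = (\<chi> i. a *\<^sub>C (x $ i))"
definition cinner_vec :: "'a^'b \<Rightarrow> 'a^'b \<Rightarrow> complex" where
  "cinner_vec x y = (\<Sum>i\<in>UNIV. cinner (x $ i) (y $ i))"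
instance
proof
  fix x y z :: "'a^'b" and a b :: complex and r :: real
  show "a *\<^sub>C (x + y) = a *\<^sub>C x + a *\<^sub>C y"
    by (simp add: scaleC_vec_def vec_eq_iff scaleC_add_right)
  show "(a + b) *\<^sub>C x = a *\<^sub>C x + b *\<^sub>C x"
    by (simp add: scaleC_vec_def vec_eq_iff scaleC_add_left)
  show "a *\<^sub>C (b *\<^sub>C x) = (a * b) *\<^sub>C x"
    by (simp add: scaleC_vec_def vec_eq_iff scaleC_scaleC)
  show "1 *\<^sub>C x = x" by (simp add: scaleC_vec_def vec_eq_iff scaleC_one)
  show "r *\<^sub>R x = complex_of_real r *\<^sub>C x"
    by (simp add: scaleC_vec_def vec_eq_iff scaleR_scaleC)
  show "cinner y x = cnj (cinner x y)"
    by (simp add: cinner_vec_def cinner_commute[of "y $ i" "x $ i" for i])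
  show "cinner x (y + z) = cinner x y + cinner x z"
    by (simp add: cinner_vec_def cinner_add_right sum.distrib)
  show "cinner x (a *\<^sub>C y) = a * cinner x y"
    by (simp add: cinner_vec_def scaleC_vec_def cinner_scaleC_right sum_distrib_left)
  show "0 \<le> Re (cinner x x)"
    by (simp add: cinner_vec_def sum_nonneg cinner_ge_zero)
  have re: "Re (cinner x x) = (\<Sum>i\<in>UNIV. (norm (x $ i))\<^sup>2)"
    by (simp add: cinner_vec_def norm_eq_sqrt_cinner cinner_ge_zero)
  show "norm x = sqrt (Re (cinner x x))"
    by (simp add: re norm_vec_def L2_set_def)
  have im: "Im (cinner (x $ i) (x $ i)) = 0" for i
    using cinner_commute[of "x $ i" "x $ i"] by (metis cnj.simps(2) neg_equal_zero)
  show "(cinner x x = 0) = (x = 0)"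
  proof
    assume "cinner x x = 0"
    then have "(\<Sum>i\<in>UNIV. (norm (x $ i))\<^sup>2) = 0" using re by simp
    then have "\<forall>i. (norm (x $ i))\<^sup>2 = 0" by (simp add: sum_nonneg_eq_0_iff)
    then show "x = 0" by (simp add: vec_eq_iff)
  next
    assume "x = 0"
    then show "cinner x x = 0"
      by (simp add: cinner_vec_def cinner_eq_zero_iff)
  qed
qed
end

definition bounded_op :: "('a::complex_hilbert \<Rightarrow> 'b::complex_hilbert) \<Rightarrow> bool" where
  "bounded_op T \<longleftrightarrow> bounded_linear T \<and> (\<forall>c x. T (c *\<^sub>C x) = c *\<^sub>C T x)"

definition op_spectrum :: "('a::complex_hilbert \<Rightarrow> 'a) \<Rightarrow> complex set" where
  "op_spectrum T = {z. \<not> (\<exists>S. bounded_op S \<and>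
       (\<forall>x. S (T x - z *\<^sub>C x) = x) \<and> (\<forall>x. T (S x) - z *\<^sub>C S x = x))}"

text \<open>Complete positivity: for every \<open>k\<close>, \<open>id\<^sub>k \<otimes> F\<close> maps positive block matrices
\<open>[M\<^sub>i\<^sub>j]\<^sub>i\<^sub>,\<^sub>j\<^sub><\<^sub>k\<close> over \<open>\<L>(\<K>)\<close> to positive block operators \<open>[F(M\<^sub>i\<^sub>j)]\<close> on \<open>\<H>^k\<close>.\<close>

definition completely_positive ::
    "(complex^'n^'n \<Rightarrow> 'a::complex_hilbert \<Rightarrow> 'a) \<Rightarrow> bool" where
  "completely_positive F \<longleftrightarrow>
     (\<forall>(k::nat) (M :: nat \<Rightarrow> nat \<Rightarrow> complex^'n^'n).
        (\<forall>v :: nat \<Rightarrow> complex^'n.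
            0 \<le> (\<Sum>i<k. \<Sum>j<k. cinner (v i) (M i j *v v j))) \<longrightarrow>
        (\<forall>h :: nat \<Rightarrow> 'a.
            0 \<le> (\<Sum>i<k. \<Sum>j<k. cinner (h i) (F (M i j) (h j)))))"

text \<open>Channels in the Heisenberg picture: linear, bounded-operator valued, unital,
completely positive maps. (Normality is automatic since \<open>\<L>(\<K>)\<close> is finite dimensional.)\<close>

definition channels :: "(complex^'n^'n \<Rightarrow> 'a::complex_hilbert \<Rightarrow> 'a) set" where
  "channels = {F.
      (\<forall>A B. F (A + B) = (\<lambda>x. F A x + F B x)) \<and>
      (\<forall>c A. F (c *\<^sub>C A) = (\<lambda>x. c *\<^sub>C F A x)) \<and>
      (\<forall>A. bounded_op (F A)) \<and>
      F (mat 1) = (\<lambda>x. x) \<and>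
      completely_positive F}"

definition chan_comb :: "real \<Rightarrow> (complex^'n^'n \<Rightarrow> 'a::complex_hilbert \<Rightarrow> 'a)
     \<Rightarrow> (complex^'n^'n \<Rightarrow> 'a \<Rightarrow> 'a) \<Rightarrow> (complex^'n^'n \<Rightarrow> 'a \<Rightarrow> 'a)" where
  "chan_comb t F G = (\<lambda>A x. complex_of_real t *\<^sub>C F A x + complex_of_real (1 - t) *\<^sub>C G A x)"

definition conv_le :: "(complex^'n^'n \<Rightarrow> 'a::complex_hilbert \<Rightarrow> 'a) set
     \<Rightarrow> (complex^'n^'n \<Rightarrow> 'a \<Rightarrow> 'a) \<Rightarrow> (complex^'n^'n \<Rightarrow> 'a \<Rightarrow> 'a) \<Rightarrow> bool" where
  "conv_le Z x y \<longleftrightarrow> (\<exists>z\<in>Z. \<exists>t::real. 0 < t \<and> t \<le> 1 \<and> y = chan_comb t x z)"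

definition conv_boundary :: "(complex^'n^'n \<Rightarrow> 'a::complex_hilbert \<Rightarrow> 'a) set
     \<Rightarrow> (complex^'n^'n \<Rightarrow> 'a \<Rightarrow> 'a) set" where
  "conv_boundary Z = {y \<in> Z. \<exists>x\<in>Z. \<not> conv_le Z x y}"

definition ket_bra :: "'n::finite \<Rightarrow> 'n \<Rightarrow> complex^'n^'n" where
  "ket_bra m n = (\<chi> i j. if i = m \<and> j = n then 1 else 0)"

text \<open>\<open>E(F) = d \<Sum>\<^sub>m\<^sub>,\<^sub>n |m\<rangle>\<langle>n| \<otimes> F(|m\<rangle>\<langle>n|)\<close> acting on \<open>\<K> \<otimes> \<H> \<cong> \<H>^d\<close>,
where \<open>x \<in> \<H>^d\<close> corresponds to \<open>\<Sum>\<^sub>n |n\<rangle> \<otimes> x\<^sub>n\<close>.\<close>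
definition choi :: "(complex^'n^'n \<Rightarrow> 'a::complex_hilbert \<Rightarrow> 'a) \<Rightarrow> 'a^'n \<Rightarrow> 'a^'n" where
  "choi F x = (\<chi> m. complex_of_nat CARD('n) *\<^sub>C (\<Sum>n\<in>UNIV. F (ket_bra m n) (x $ n)))"

end

theory Submission
  imports Defs
begin

text \<open>The Choi operator \<open>E(\<F>)\<close> of a channel is positive, and \<open>\<G> \<le>\<^sub>C \<F>\<close> holds as soon as
\<open>t E(\<G>) \<le> E(\<F>)\<close> for some \<open>0 < t < 1\<close>, because \<open>(\<F> - t \<G>) / (1 - t)\<close> then has a positive
Choi operator and is again a channel. If \<open>0\<close> is not in the spectrum of \<open>E(\<F>)\<close>, the positive
operator \<open>E(\<F>)\<close> is bounded below by some \<open>c > 0\<close> and so dominates \<open>t E(\<G>)\<close> for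
\<open>t = c / \<parallel>E(\<G>)\<parallel>\<close>; thus \<open>\<G> \<le>\<^sub>C \<F>\<close> for every channel \<open>\<G>\<close>. Conversely, the completely
depolarizing channel \<open>\<D>(A) = (tr A / d) 1\<close> has \<open>E(\<D>) = 1\<close>, so \<open>\<D> \<le>\<^sub>C \<F>\<close> forces
\<open>E(\<F>) \<ge> t > 0\<close>, and such a coercive operator is invertible by the Lax--Milgram argument.
Complete positivity is recovered from positivity of the Choi operator through the Gram
decomposition of positive semidefinite matrices and the Schur product theorem.\<close>

context complex_hilbert begin

lemma scaleC_zero_left [simp]: "0 *\<^sub>C x = 0"
proof -
  have "0 *\<^sub>C x = 0 *\<^sub>C x + 0 *\<^sub>C x" using scaleC_add_left[of 0 0 x] by simp
  then show ?thesis by simp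
qed

lemma scaleC_zero_right [simp]: "a *\<^sub>C 0 = 0"
proof -
  have "a *\<^sub>C 0 = a *\<^sub>C 0 + a *\<^sub>C 0" using scaleC_add_right[of a 0 0] by simp
  then show ?thesis by simp
qed

lemma scaleC_minus_left: "(- a) *\<^sub>C x = - (a *\<^sub>C x)"
  using scaleC_add_left[of a "-a" x] by (simp add: minus_unique)

lemma scaleC_minus_right: "a *\<^sub>C (- x) = - (a *\<^sub>C x)"
  using scaleC_add_right[of a x "-x"] by (simp add: minus_unique)

lemma scaleC_diff_right: "a *\<^sub>C (x - y) = a *\<^sub>C x - a *\<^sub>C y"
  using scaleC_add_right[of a x "-y"] by (simp add: scaleC_minus_right)

lemma scaleC_sum_right: "a *\<^sub>C (\<Sum>i\<in>I. f i) = (\<Sum>i\<in>I. a *\<^sub>C f i)"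
  by (induction I rule: infinite_finite_induct) (auto simp: scaleC_add_right)

lemma scaleC_of_real: "complex_of_real r *\<^sub>C x = r *\<^sub>R x"
  by (simp add: scaleR_scaleC)

lemma scaleC_eq_0_imp:
  assumes "a *\<^sub>C x = 0" "a \<noteq> 0"
  shows "x = 0"
proof -
  have "x = (inverse a * a) *\<^sub>C x" using assms(2) by (simp add: scaleC_one)
  also have "\<dots> = inverse a *\<^sub>C (a *\<^sub>C x)" by (simp add: scaleC_scaleC)
  finally show ?thesis using assms(1) by simp
qed

lemma cinner_add_left: "cinner (x + y) z = cinner x z + cinner y z"
proof -
  have "cinner (x + y) z = cnj (cinner z (x + y))" by (rule cinner_commute)
  also have "\<dots> = cnj (cinner z x) + cnj (cinner z y)" by (simp add: cinner_add_right)
  also have "\<dots> = cinner x z + cinner y z" by (simp add: cinner_commute[of x z] cinner_commute[of y z])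
  finally show ?thesis .
qed

lemma cinner_scaleC_left: "cinner (a *\<^sub>C x) y = cnj a * cinner x y"
proof -
  have "cinner (a *\<^sub>C x) y = cnj (cinner y (a *\<^sub>C x))" by (rule cinner_commute)
  also have "\<dots> = cnj a * cnj (cinner y x)" by (simp add: cinner_scaleC_right)
  also have "\<dots> = cnj a * cinner x y" by (simp add: cinner_commute[of x y])
  finally show ?thesis .
qed

lemma cinner_zero_left [simp]: "cinner 0 y = 0"
  using cinner_add_left[of 0 0 y] by simp

lemma cinner_zero_right [simp]: "cinner x 0 = 0"
  using cinner_add_right[of x 0 0] by simp

lemma cinner_minus_left: "cinner (- x) y = - cinner x y"
proof -
  have "cinner x y + cinner (-x) y = 0" using cinner_add_left[of x "-x" y] by simp
  then show ?thesis by (simp add: complex_eq_iff)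
qed

lemma cinner_minus_right: "cinner x (- y) = - cinner x y"
proof -
  have "cinner x y + cinner x (-y) = 0" using cinner_add_right[of x y "-y"] by simp
  then show ?thesis by (simp add: complex_eq_iff)
qed

lemma cinner_diff_left: "cinner (x - y) z = cinner x z - cinner y z"
  using cinner_add_left[of x "-y" z] by (simp add: cinner_minus_left)

lemma cinner_diff_right: "cinner x (y - z) = cinner x y - cinner x z"
  using cinner_add_right[of x y "-z"] by (simp add: cinner_minus_right)

lemma cinner_sum_right: "cinner x (\<Sum>i\<in>I. f i) = (\<Sum>i\<in>I. cinner x (f i))"
  by (induction I rule: infinite_finite_induct) (auto simp: cinner_add_right)

lemma cinner_sum_left: "cinner (\<Sum>i\<in>I. f i) y = (\<Sum>i\<in>I. cinner (f i) y)"
  by (induction I rule: infinite_finite_induct) (auto simp: cinner_add_left)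

lemma Re_cinner_commute: "Re (cinner y x) = Re (cinner x y)"
  by (subst cinner_commute) simp

lemma Im_cinner_self [simp]: "Im (cinner x x) = 0"
  using cinner_commute[of x x] by (metis cnj.simps(2) neg_equal_zero)

lemma cinner_self: "cinner x x = complex_of_real ((norm x)\<^sup>2)"
  using norm_eq_sqrt_cinner[of x] cinner_ge_zero[of x] by (simp add: complex_eq_iff)

lemma Re_cinner_self: "Re (cinner x x) = (norm x)\<^sup>2"
  by (simp add: cinner_self)

lemma norm_scaleC: "norm (a *\<^sub>C x) = cmod a * norm x"
proof -
  have "(norm (a *\<^sub>C x))\<^sup>2 = Re (cnj a * a * cinner x x)"
    by (simp add: Re_cinner_self[symmetric] cinner_scaleC_left cinner_scaleC_right mult.assoc)
  also have "cnj a * a = complex_of_real ((cmod a)\<^sup>2)"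
    by (metis complex_norm_square mult.commute of_real_power)
  also have "Re (complex_of_real ((cmod a)\<^sup>2) * cinner x x) = (cmod a * norm x)\<^sup>2"
    by (simp add: cinner_self power_mult_distrib)
  finally show ?thesis by (simp add: power2_eq_iff_nonneg)
qed

lemma Re_cinner_le_half_sum_squares: "Re (cinner x y) \<le> ((norm x)\<^sup>2 + (norm y)\<^sup>2) / 2"
proof -
  have "0 \<le> Re (cinner (x - y) (x - y))" by (rule cinner_ge_zero)
  also have "Re (cinner (x - y) (x - y)) = (norm x)\<^sup>2 + (norm y)\<^sup>2 - 2 * Re (cinner x y)"
    by (simp add: cinner_diff_left cinner_diff_right Re_cinner_self Re_cinner_commute[of y x])
  finally show ?thesis by simp
qed

lemma Re_cinner_le_norm_mult: "Re (cinner x y) \<le> norm x * norm y"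
proof (cases "x = 0 \<or> y = 0")
  case True then show ?thesis by auto
next
  case False
  then have nx: "norm x > 0" and ny: "norm y > 0" by auto
  define u where "u = complex_of_real (1 / norm x) *\<^sub>C x"
  define v where "v = complex_of_real (1 / norm y) *\<^sub>C y"
  have "norm u = 1" "norm v = 1"
    using nx ny by (simp_all add: u_def v_def norm_scaleC norm_divide)
  then have "Re (cinner u v) \<le> 1" using Re_cinner_le_half_sum_squares[of u v] by simp
  moreover have "Re (cinner u v) = Re (cinner x y) / (norm x * norm y)"
    by (simp add: u_def v_def cinner_scaleC_left cinner_scaleC_right)
  ultimately show ?thesis using nx ny by (simp add: divide_le_eq)
qed

end

lemma cinner_vec_sum: "cinner (x::'a::complex_hilbert^'n) y = (\<Sum>i\<in>UNIV. cinner (x$i) (y$i))"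
  by (simp add: cinner_vec_def)

lemma scaleC_vec_nth [simp]: "(c *\<^sub>C x) $ i = c *\<^sub>C (x $ i)"
  by (simp add: scaleC_vec_def)

lemma cinner_complex_eq [simp]: "cinner (x::complex) y = cnj x * y"
  by (simp add: cinner_complex_def)

lemma scaleC_complex_eq [simp]: "c *\<^sub>C (x::complex) = c * x"
  by (simp add: scaleC_complex_def)

lemma bounded_linear_scaleC: "bounded_linear (\<lambda>x::'a::complex_hilbert. a *\<^sub>C x)"
proof (rule bounded_linear_intro[where K="cmod a"])
  fix x y :: 'a and r :: real
  show "a *\<^sub>C (x + y) = a *\<^sub>C x + a *\<^sub>C y" by (rule scaleC_add_right)
  show "a *\<^sub>C (r *\<^sub>R x) = r *\<^sub>R (a *\<^sub>C x)"
    by (simp add: scaleR_scaleC scaleC_scaleC mult.commute)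
  show "norm (a *\<^sub>C x) \<le> norm x * cmod a" by (simp add: norm_scaleC mult.commute)
qed

lemma bounded_op_scaleC: "bounded_op (\<lambda>x::'a::complex_hilbert. k *\<^sub>C x)"
  unfolding bounded_op_def using bounded_linear_scaleC[of k]
  by (simp add: scaleC_scaleC mult.commute)

lemma bounded_op_lincomb:
  fixes S T :: "'a::complex_hilbert \<Rightarrow> 'a"
  assumes "bounded_op S" "bounded_op T"
  shows "bounded_op (\<lambda>x. a *\<^sub>C S x + b *\<^sub>C T x)"
proof -
  have "bounded_linear S" "bounded_linear T"
    using assms by (auto simp: bounded_op_def)
  then have "bounded_linear (\<lambda>x. a *\<^sub>C S x + b *\<^sub>C T x)"
    by (intro bounded_linear_add bounded_linear_compose[OF bounded_linear_scaleC])
  moreover have "a *\<^sub>C S (c *\<^sub>C x) + b *\<^sub>C T (c *\<^sub>C x) = c *\<^sub>C (a *\<^sub>C S x + b *\<^sub>C T x)" for c x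
    using assms by (simp add: bounded_op_def scaleC_scaleC scaleC_add_right mult.commute)
  ultimately show ?thesis by (simp add: bounded_op_def)
qed

lemma bounded_op_sum:
  assumes "bounded_op T"
  shows "T (\<Sum>i\<in>I. f i) = (\<Sum>i\<in>I. T (f i))"
proof -
  have "bounded_linear T" using assms by (simp add: bounded_op_def)
  then show ?thesis using linear_sum[OF bounded_linear.linear] by simp
qed

lemma bounded_op_scaleC_commute:
  assumes "bounded_op T"
  shows "T (c *\<^sub>C x) = c *\<^sub>C T x"
  using assms by (simp add: bounded_op_def)

section \<open>Positive semidefinite matrices and Gram decompositions\<close>

definition qform :: "'p set \<Rightarrow> ('p \<Rightarrow> 'p \<Rightarrow> complex) \<Rightarrow> ('p \<Rightarrow> complex) \<Rightarrow> complex" where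
  "qform P M v = (\<Sum>p\<in>P. \<Sum>q\<in>P. cnj (v p) * M p q * v q)"

definition psd_on :: "'p set \<Rightarrow> ('p \<Rightarrow> 'p \<Rightarrow> complex) \<Rightarrow> bool" where
  "psd_on P M \<longleftrightarrow> (\<forall>v. 0 \<le> qform P M v)"

definition gram_rep :: "'p set \<Rightarrow> ('p \<Rightarrow> 'p \<Rightarrow> complex) \<Rightarrow> ('p \<Rightarrow> complex) list \<Rightarrow> bool" where
  "gram_rep P M ws \<longleftrightarrow> (\<forall>p\<in>P. \<forall>q\<in>P. M p q = (\<Sum>w\<leftarrow>ws. w p * cnj (w q)))"

lemma qform_support:
  assumes "finite P" "S \<subseteq> P" "\<forall>x\<in>P - S. v x = 0"
  shows "qform P M v = qform S M v"
proof -
  have "qform P M v = (\<Sum>p\<in>S. \<Sum>q\<in>P. cnj (v p) * M p q * v q)"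
    unfolding qform_def by (rule sum.mono_neutral_right) (use assms in auto)
  also have "\<dots> = qform S M v"
    unfolding qform_def
    by (rule sum.cong[OF refl], rule sum.mono_neutral_right) (use assms in auto)
  finally show ?thesis .
qed

lemma qform_single:
  assumes "finite P" "p \<in> P"
  shows "qform P M (\<lambda>x. if x = p then a else 0) = cnj a * M p p * a"
proof -
  have "qform P M (\<lambda>x. if x = p then a else 0) = qform {p} M (\<lambda>x. if x = p then a else 0)"
    by (rule qform_support) (use assms in auto)
  also have "\<dots> = cnj a * M p p * a" by (simp add: qform_def)
  finally show ?thesis .
qed

lemma qform_pair:
  assumes "finite P" "p \<in> P" "q \<in> P" "p \<noteq> q"
  shows "qform P M (\<lambda>x. if x = p then a else if x = q then b else 0) =
     cnj a * M p p * a + cnj a * M p q * b + cnj b * M q p * a + cnj b * M q q * b"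
proof -
  have "qform P M (\<lambda>x. if x = p then a else if x = q then b else 0) =
        qform {p,q} M (\<lambda>x. if x = p then a else if x = q then b else 0)"
    by (rule qform_support) (use assms in auto)
  also have "\<dots> = cnj a * M p p * a + cnj a * M p q * b + cnj b * M q p * a + cnj b * M q q * b"
    using assms by (simp add: qform_def)
  finally show ?thesis .
qed

lemma qform_insert:
  assumes "finite P" "p0 \<notin> P"
  shows "qform (insert p0 P) M u = cnj (u p0) * M p0 p0 * u p0 + cnj (u p0) * (\<Sum>q\<in>P. M p0 q * u q)
           + (\<Sum>p\<in>P. cnj (u p) * M p p0) * u p0 + qform P M u"
  using assms unfolding qform_def
  by (simp add: sum.distrib sum_distrib_left sum_distrib_right mult.assoc)

lemma qform_fun_upd_outside: "p0 \<notin> P \<Longrightarrow> qform P M (v(p0 := a)) = qform P M v"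
  unfolding qform_def by (intro sum.cong refl) auto

lemma psd_on_diag_nonneg:
  assumes "psd_on P M" "finite P" "p \<in> P"
  shows "0 \<le> M p p"
proof -
  have "0 \<le> qform P M (\<lambda>x. if x = p then 1 else 0)" using assms(1) unfolding psd_on_def by blast
  then show ?thesis by (simp add: qform_single[OF assms(2,3)])
qed

lemma psd_on_hermitian:
  assumes "psd_on P M" "finite P" "p \<in> P" "q \<in> P"
  shows "M q p = cnj (M p q)"
proof (cases "p = q")
  case True
  then show ?thesis
    using psd_on_diag_nonneg[OF assms(1,2,3)] by (simp add: less_eq_complex_def complex_eq_iff)
next
  case False
  have diag: "Im (M p p) = 0" "Im (M q q) = 0"
    using psd_on_diag_nonneg[OF assms(1,2,3)] psd_on_diag_nonneg[OF assms(1,2,4)]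
    by (auto simp: less_eq_complex_def)
  have "0 \<le> qform P M (\<lambda>x. if x = p then 1 else if x = q then 1 else 0)"
    using assms(1) unfolding psd_on_def by blast
  then have "Im (M p q) + Im (M q p) = 0"
    using qform_pair[OF assms(2,3,4) False, of M 1 1] diag by (simp add: less_eq_complex_def)
  moreover have "0 \<le> qform P M (\<lambda>x. if x = p then 1 else if x = q then \<i> else 0)"
    using assms(1) unfolding psd_on_def by blast
  then have "Re (M p q) - Re (M q p) = 0"
    using qform_pair[OF assms(2,3,4) False, of M 1 \<i>] diag by (simp add: less_eq_complex_def)
  ultimately show ?thesis by (simp add: complex_eq_iff)
qed

lemma psd_on_zero_diag_row:
  assumes "psd_on P M" "finite P" "p \<in> P" "q \<in> P" "M p p = 0"
  shows "M p q = 0"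
proof (rule ccontr)
  define c where "c = M p q"
  assume "M p q \<noteq> 0"
  then have c0: "c \<noteq> 0" and pq: "p \<noteq> q" using assms(5) c_def by auto
  define n where "n = Re (cnj c * c)"
  have "n = (cmod c)\<^sup>2" unfolding n_def using cmod_power2[of c] by (simp add: power2_eq_square)
  then have npos: "n > 0" using c0 by simp
  \<comment> \<open>test vector \<open>a e\<^sub>p + e\<^sub>q\<close> with \<open>a = -s c\<close> chosen to make the form equal to \<open>-1\<close>\<close>
  define s where "s = (Re (M q q) + 1) / (2 * n)"
  define a where "a = - (complex_of_real s * c)"
  have "0 \<le> qform P M (\<lambda>x. if x = p then a else if x = q then 1 else 0)"
    using assms(1) unfolding psd_on_def by blast
  then have "0 \<le> Re (cnj a * c + cnj c * a + M q q)"
    using qform_pair[OF assms(2,3,4) pq, of M a 1] assms(5) psd_on_hermitian[OF assms(1-4)] c_def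
    by (simp add: less_eq_complex_def mult.commute)
  also have "Re (cnj a * c + cnj c * a + M q q) = - 2 * s * n + Re (M q q)"
    unfolding a_def n_def by (simp add: algebra_simps)
  also have "\<dots> = -1" using npos unfolding s_def by (simp add: field_simps)
  finally show False by simp
qed

lemma psd_on_insertD:
  assumes "psd_on (insert p0 P) M" "finite P" "p0 \<notin> P"
  shows "psd_on P M"
  unfolding psd_on_def
proof
  fix v
  have "0 \<le> qform (insert p0 P) M (v(p0 := 0))" using assms unfolding psd_on_def by blast
  also have "qform (insert p0 P) M (v(p0 := 0)) = qform P M (v(p0 := 0))"
    by (rule qform_support) (use assms in auto)
  also have "\<dots> = qform P M v" by (rule qform_fun_upd_outside[OF assms(3)])
  finally show "0 \<le> qform P M v" .
qed

lemma psd_on_schur_complement: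
  assumes psd: "psd_on (insert p0 P) M" and fin: "finite P" and notin: "p0 \<notin> P"
    and pivot: "M p0 p0 = complex_of_real r" and rpos: "r > 0"
  shows "psd_on P (\<lambda>p q. M p q - M p p0 * M p0 q / complex_of_real r)"
  unfolding psd_on_def
proof
  fix v :: "'a \<Rightarrow> complex"
  define R where "R = complex_of_real r"
  define \<beta> where "\<beta> = (\<Sum>q\<in>P. M p0 q * v q)"
  have \<gamma>: "(\<Sum>p\<in>P. cnj (v p) * M p p0) = cnj \<beta>"
  proof -
    have "M p p0 = cnj (M p0 p)" if "p \<in> P" for p
      using psd_on_hermitian[OF psd, of p0 p] fin that by simp
    then show ?thesis unfolding \<beta>_def by (simp add: mult.commute)
  qed
  \<comment> \<open>extend \<open>v\<close> by the value at \<open>p\<^sub>0\<close> that minimises the form\<close>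
  define u where "u = v(p0 := - \<beta> / R)"
  have "(\<Sum>q\<in>P. M p0 q * u q) = \<beta>"
    unfolding \<beta>_def u_def using notin by (intro sum.cong refl) auto
  moreover have "(\<Sum>p\<in>P. cnj (u p) * M p p0) = cnj \<beta>"
    unfolding \<gamma>[symmetric] u_def using notin by (intro sum.cong refl) auto
  ultimately have "qform (insert p0 P) M u = qform P M v - cnj \<beta> * \<beta> / R"
    using qform_insert[OF fin notin, of M u] qform_fun_upd_outside[OF notin] rpos
    by (simp add: u_def pivot R_def field_simps)
  also have "cnj \<beta> * \<beta> = (\<Sum>p\<in>P. \<Sum>q\<in>P. (cnj (v p) * M p p0) * (M p0 q * v q))"
    by (subst \<gamma>[symmetric]) (simp add: \<beta>_def sum_product)
  also have "qform P M v - \<dots> / R = qform P (\<lambda>p q. M p q - M p p0 * M p0 q / complex_of_real r) v"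
    unfolding qform_def R_def by (simp add: sum_subtractf sum_divide_distrib algebra_simps)
  finally show "0 \<le> qform P (\<lambda>p q. M p q - M p p0 * M p0 q / complex_of_real r) v"
    using psd unfolding psd_on_def by metis
qed

lemma gram_rep_insert_zero:
  assumes "gram_rep P M ws"
    and "\<forall>q\<in>insert p0 P. M p0 q = 0 \<and> M q p0 = 0"
  shows "gram_rep (insert p0 P) M (map (\<lambda>w. w(p0 := 0)) ws)"
  unfolding gram_rep_def
proof (intro ballI)
  fix p q assume p: "p \<in> insert p0 P" and q: "q \<in> insert p0 P"
  show "M p q = (\<Sum>w\<leftarrow>map (\<lambda>w. w(p0 := 0)) ws. w p * cnj (w q))"
  proof (cases "p = p0 \<or> q = p0")
    case True
    then show ?thesis using assms(2) p q by (induction ws) auto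
  next
    case False
    then have "(\<Sum>w\<leftarrow>map (\<lambda>w. w(p0 := 0)) ws. w p * cnj (w q)) = (\<Sum>w\<leftarrow>ws. w p * cnj (w q))"
      by (induction ws) auto
    then show ?thesis using assms(1) p q False by (simp add: gram_rep_def)
  qed
qed

lemma gram_rep_insert_pivot:
  assumes "gram_rep P (\<lambda>p q. M p q - M p p0 * M p0 q / complex_of_real r) ws"
    and herm: "\<forall>q\<in>insert p0 P. M q p0 = cnj (M p0 q)"
    and pivot: "M p0 p0 = complex_of_real r" "r > 0"
  shows "gram_rep (insert p0 P) M
           ((\<lambda>p. M p p0 / complex_of_real (sqrt r)) # map (\<lambda>w. w(p0 := 0)) ws)"
  unfolding gram_rep_def
proof (intro ballI)
  fix p q assume p: "p \<in> insert p0 P" and q: "q \<in> insert p0 P"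
  define w0 where "w0 = (\<lambda>p. M p p0 / complex_of_real (sqrt r))"
  have "complex_of_real (sqrt r) * complex_of_real (sqrt r) = complex_of_real r"
    using pivot(2) by (simp flip: of_real_mult)
  moreover have "M q p0 = cnj (M p0 q)" using herm q by blast
  then have "cnj (M q p0) = M p0 q" by simp
  ultimately have w0: "w0 p * cnj (w0 q) = M p p0 * M p0 q / complex_of_real r"
    unfolding w0_def by simp
  show "M p q = (\<Sum>w\<leftarrow>w0 # map (\<lambda>w. w(p0 := 0)) ws. w p * cnj (w q))"
  proof (cases "p = p0 \<or> q = p0")
    case True
    then have "(\<Sum>w\<leftarrow>map (\<lambda>w. w(p0 := 0)) ws. w p * cnj (w q)) = 0"
      by (induction ws) auto
    moreover have "M p q = M p p0 * M p0 q / complex_of_real r"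
      using True pivot by auto
    ultimately show ?thesis using w0 by simp
  next
    case False
    then have "(\<Sum>w\<leftarrow>map (\<lambda>w. w(p0 := 0)) ws. w p * cnj (w q)) = (\<Sum>w\<leftarrow>ws. w p * cnj (w q))"
      by (induction ws) auto
    moreover have "M p q - M p p0 * M p0 q / complex_of_real r = (\<Sum>w\<leftarrow>ws. w p * cnj (w q))"
      using assms(1) p q False by (simp add: gram_rep_def)
    ultimately show ?thesis using w0 by (simp add: algebra_simps)
  qed
qed

text \<open>Cholesky-style elimination: a zero pivot has a zero row, a positive pivot is split off
as a rank-one term and the Schur complement is handled inductively.\<close>

lemma psd_on_gram_rep:
  assumes "finite P" "psd_on P M"
  shows "\<exists>ws. gram_rep P M ws"
  using assms
proof (induction P arbitrary: M rule: finite_induct)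
  case empty
  then show ?case by (simp add: gram_rep_def)
next
  case (insert p0 P M)
  have fin: "finite (insert p0 P)" using insert.hyps by simp
  define r where "r = Re (M p0 p0)"
  have herm: "\<forall>q\<in>insert p0 P. M q p0 = cnj (M p0 q)"
    using psd_on_hermitian[OF insert.prems fin] by blast
  have pivot: "M p0 p0 = complex_of_real r" "r \<ge> 0"
    using psd_on_diag_nonneg[OF insert.prems fin, of p0] unfolding r_def
    by (auto simp: less_eq_complex_def complex_eq_iff)
  show ?case
  proof (cases "r = 0")
    case True
    have "M p0 q = 0" if "q \<in> insert p0 P" for q
      using psd_on_zero_diag_row[OF insert.prems fin _ that] pivot True by simp
    then have "\<forall>q\<in>insert p0 P. M p0 q = 0 \<and> M q p0 = 0"
      using herm by (metis complex_cnj_zero)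
    moreover obtain ws where "gram_rep P M ws"
      using insert.IH psd_on_insertD[OF insert.prems insert.hyps] by blast
    ultimately show ?thesis by (blast intro: gram_rep_insert_zero)
  next
    case False
    then have "r > 0" using pivot by simp
    then obtain ws where "gram_rep P (\<lambda>p q. M p q - M p p0 * M p0 q / complex_of_real r) ws"
      using insert.IH psd_on_schur_complement[OF insert.prems insert.hyps pivot(1)] by blast
    then show ?thesis using gram_rep_insert_pivot[OF _ herm pivot(1) \<open>r > 0\<close>] by blast
  qed
qed

lemma sum_psd_mult_nonneg:
  assumes "finite P" "psd_on P N"
    and X: "\<forall>u. 0 \<le> (\<Sum>p\<in>P. \<Sum>q\<in>P. u p * X p q * cnj (u q))"
  shows "0 \<le> (\<Sum>p\<in>P. \<Sum>q\<in>P. N p q * X p q)"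
proof -
  obtain ws where ws: "gram_rep P N ws"
    using psd_on_gram_rep[OF assms(1,2)] by blast
  have "(\<Sum>p\<in>P. \<Sum>q\<in>P. N p q * X p q) = (\<Sum>p\<in>P. \<Sum>q\<in>P. (\<Sum>w\<leftarrow>ws. w p * cnj (w q)) * X p q)"
    using ws by (intro sum.cong refl) (simp add: gram_rep_def)
  also have "\<dots> = (\<Sum>w\<leftarrow>ws. \<Sum>p\<in>P. \<Sum>q\<in>P. w p * X p q * cnj (w q))"
    by (induction ws) (simp_all add: algebra_simps sum.distrib)
  also have "0 \<le> \<dots>"
    by (rule sum_list_nonneg) (use X in auto)
  finally show ?thesis by simp
qed

section \<open>Linear maps on matrices and the Choi operator\<close>

definition op_linear :: "(complex^'n^'n \<Rightarrow> 'a::complex_hilbert \<Rightarrow> 'a) \<Rightarrow> bool" where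
  "op_linear F \<longleftrightarrow> (\<forall>A B. F (A + B) = (\<lambda>x. F A x + F B x)) \<and>
     (\<forall>c A. F (c *\<^sub>C A) = (\<lambda>x. c *\<^sub>C F A x)) \<and> (\<forall>A. bounded_op (F A))"

lemma channels_op_linear: "F \<in> channels \<Longrightarrow> op_linear F"
  by (simp add: channels_def op_linear_def)

lemma channels_iff:
  "F \<in> channels \<longleftrightarrow> op_linear F \<and> F (mat 1) = (\<lambda>x. x) \<and> completely_positive F"
  by (auto simp: channels_def op_linear_def)

lemma ket_bra_nth [simp]: "ket_bra a b $ i $ j = (if i = a \<and> j = b then 1 else 0)"
  by (simp add: ket_bra_def)

lemma matrix_eq_sum_ket_bra: "(A::complex^'n^'n) = (\<Sum>a\<in>UNIV. \<Sum>b\<in>UNIV. (A$a$b) *\<^sub>C ket_bra a b)"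
proof -
  have "(\<Sum>a\<in>UNIV. \<Sum>b\<in>UNIV. (A$a$b) *\<^sub>C ket_bra a b) $ i $ j = A $ i $ j" for i j
  proof -
    have "(\<Sum>a\<in>UNIV. \<Sum>b\<in>UNIV. (A$a$b) *\<^sub>C ket_bra a b) $ i $ j
        = (\<Sum>a\<in>UNIV. \<Sum>b\<in>UNIV. A$a$b * (if i = a \<and> j = b then 1 else 0))"
      by simp
    also have "\<dots> = (\<Sum>a\<in>UNIV. if a = i then A$a$j else 0)"
      by (rule sum.cong[OF refl]) (auto simp: if_distrib cong: if_cong)
    finally show ?thesis by simp
  qed
  then show ?thesis by (simp add: vec_eq_iff)
qed

lemma op_linear_sum:
  fixes F :: "complex^'n^'n \<Rightarrow> 'a::complex_hilbert \<Rightarrow> 'a"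
  assumes "op_linear F"
  shows "F (\<Sum>i\<in>I. A i) x = (\<Sum>i\<in>I. F (A i) x)"
proof -
  have "F 0 x = 0"
    using assms unfolding op_linear_def by (metis scaleC_zero_left)
  then show ?thesis
    using assms by (induction I rule: infinite_finite_induct) (simp_all add: op_linear_def)
qed

lemma op_linear_eq_sum_ket_bra:
  fixes F :: "complex^'n^'n \<Rightarrow> 'a::complex_hilbert \<Rightarrow> 'a"
  assumes "op_linear F"
  shows "F A x = (\<Sum>a\<in>UNIV. \<Sum>b\<in>UNIV. (A$a$b) *\<^sub>C F (ket_bra a b) x)"
proof -
  have "F A x = F (\<Sum>a\<in>UNIV. \<Sum>b\<in>UNIV. (A$a$b) *\<^sub>C ket_bra a b) x"
    by (subst matrix_eq_sum_ket_bra) simp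
  also have "\<dots> = (\<Sum>a\<in>UNIV. \<Sum>b\<in>UNIV. (A$a$b) *\<^sub>C F (ket_bra a b) x)"
    using assms by (simp add: op_linear_sum op_linear_def)
  finally show ?thesis .
qed

lemma cinner_choi:
  fixes F :: "complex^'n^'n \<Rightarrow> 'a::complex_hilbert \<Rightarrow> 'a"
  shows "cinner y (choi F y) = complex_of_nat CARD('n) *
     (\<Sum>a\<in>UNIV. \<Sum>b\<in>UNIV. cinner (y $ a) (F (ket_bra a b) (y $ b)))"
  unfolding choi_def
  by (simp add: cinner_vec_sum cinner_scaleC_right cinner_sum_right sum_distrib_left)

lemma bounded_linear_vec_lambda:
  fixes f :: "'a::real_normed_vector \<Rightarrow> 'i::finite \<Rightarrow> 'b::real_normed_vector"
  assumes "\<And>i. bounded_linear (\<lambda>x. f x i)"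
  shows "bounded_linear (\<lambda>x. \<chi> i. f x i)"
proof -
  obtain K where K: "\<And>i x. norm (f x i) \<le> norm x * K i"
    using bounded_linear.bounded[OF assms] by metis
  show ?thesis
  proof (rule bounded_linear_intro[where K="\<Sum>i\<in>UNIV. K i"])
    fix x y :: 'a and r :: real
    show "(\<chi> i. f (x + y) i) = (\<chi> i. f x i) + (\<chi> i. f y i)"
      using linear_add[OF bounded_linear.linear[OF assms]] by (simp add: vec_eq_iff)
    show "(\<chi> i. f (r *\<^sub>R x) i) = r *\<^sub>R (\<chi> i. f x i)"
      using linear_scale[OF bounded_linear.linear[OF assms]] by (simp add: vec_eq_iff)
    have "norm (\<chi> i. f x i) \<le> (\<Sum>i\<in>UNIV. norm (f x i))"
      unfolding norm_vec_def by (simp add: L2_set_le_sum)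
    also have "\<dots> \<le> (\<Sum>i\<in>UNIV. norm x * K i)"
      by (rule sum_mono) (rule K)
    finally show "norm (\<chi> i. f x i) \<le> norm x * (\<Sum>i\<in>UNIV. K i)"
      by (simp add: sum_distrib_left)
  qed
qed

lemma bounded_op_choi:
  fixes F :: "complex^'n^'n \<Rightarrow> 'a::complex_hilbert \<Rightarrow> 'a"
  assumes "op_linear F"
  shows "bounded_op (choi F)"
proof -
  have bop: "\<And>A. bounded_op (F A)" using assms by (simp add: op_linear_def)
  then have "\<And>A. bounded_linear (F A)" by (simp add: bounded_op_def)
  then have "bounded_linear (choi F)"
    unfolding choi_def
    by (intro bounded_linear_vec_lambda bounded_linear_compose[OF bounded_linear_scaleC]
        bounded_linear_sum bounded_linear_compose[OF _ bounded_linear_vec_nth])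
  moreover have "choi F (c *\<^sub>C x) = c *\<^sub>C choi F x" for c x
    unfolding choi_def using bop
    by (simp add: vec_eq_iff bounded_op_scaleC_commute scaleC_sum_right scaleC_scaleC mult.commute)
  ultimately show ?thesis by (simp add: bounded_op_def)
qed

lemma cinner_ket_bra: "cinner (w::complex^'n) (ket_bra a b *v x) = cnj (w $ a) * x $ b"
proof -
  have "(if P then 1 else 0) * z = (if P then z else 0)" for P and z :: complex
    by simp
  then have entry: "(ket_bra a b *v x) $ c = (if c = a then x $ b else 0)" for c
    by (cases "c = a") (simp_all add: matrix_vector_mult_def)
  show ?thesis by (simp add: cinner_vec_sum entry if_distrib cong: if_cong)
qed

lemma block_ket_bra_nonneg:
  fixes \<sigma> :: "nat \<Rightarrow> 'n::finite" and v :: "nat \<Rightarrow> complex^'n"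
  shows "0 \<le> (\<Sum>i<k. \<Sum>j<k. cinner (v i) (ket_bra (\<sigma> i) (\<sigma> j) *v v j))"
proof -
  have "(\<Sum>i<k. \<Sum>j<k. cinner (v i) (ket_bra (\<sigma> i) (\<sigma> j) *v v j)) =
      cnj (\<Sum>i<k. v i $ \<sigma> i) * (\<Sum>j<k. v j $ \<sigma> j)"
    by (simp add: cinner_ket_bra sum_product)
  moreover have "0 \<le> cnj z * z" for z :: complex
    by (simp add: less_eq_complex_def)
  ultimately show ?thesis by metis
qed

lemma choi_nonneg_if_completely_positive:
  fixes F :: "complex^'n^'n \<Rightarrow> 'a::complex_hilbert \<Rightarrow> 'a"
  assumes "completely_positive F"
  shows "0 \<le> cinner y (choi F y)"
proof -
  obtain \<sigma> where \<sigma>: "bij_betw \<sigma> {..<CARD('n)} (UNIV :: 'n set)"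
    using ex_bij_betw_nat_finite[of "UNIV :: 'n set"] by (auto simp: atLeast0LessThan)
  \<comment> \<open>complete positivity applied to the positive block matrix \<open>[|\<sigma> i\<rangle>\<langle>\<sigma> j|]\<^sub>i\<^sub>j\<close>\<close>
  have "\<forall>h :: nat \<Rightarrow> 'a. 0 \<le> (\<Sum>i<CARD('n). \<Sum>j<CARD('n).
              cinner (h i) (F (ket_bra (\<sigma> i) (\<sigma> j)) (h j)))"
    using spec[OF spec[OF assms[unfolded completely_positive_def], of "CARD('n)"],
        of "\<lambda>i j. ket_bra (\<sigma> i) (\<sigma> j)"] block_ket_bra_nonneg by blast
  then have "0 \<le> (\<Sum>i<CARD('n). \<Sum>j<CARD('n).
              cinner (y $ \<sigma> i) (F (ket_bra (\<sigma> i) (\<sigma> j)) (y $ \<sigma> j)))"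
    by (rule spec)
  also have "\<dots> = (\<Sum>i<CARD('n). \<Sum>b\<in>UNIV. cinner (y $ \<sigma> i) (F (ket_bra (\<sigma> i) b) (y $ b)))"
    by (intro sum.cong refl sum.reindex_bij_betw[OF \<sigma>])
  also have "\<dots> = (\<Sum>a\<in>UNIV. \<Sum>b\<in>UNIV. cinner (y $ a) (F (ket_bra a b) (y $ b)))"
    by (rule sum.reindex_bij_betw[OF \<sigma>])
  finally show ?thesis
    unfolding cinner_choi by (simp add: less_eq_complex_def)
qed

lemma sum_cinner_op_linear_block:
  fixes F :: "complex^'n^'n \<Rightarrow> 'a::complex_hilbert \<Rightarrow> 'a"
  assumes "op_linear F"
  shows "(\<Sum>i<k. \<Sum>j<k. cinner (h i) (F (M i j) (h j))) =
    (\<Sum>p\<in>{..<k} \<times> UNIV. \<Sum>q\<in>{..<k} \<times> UNIV.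
       M (fst p) (fst q) $ snd p $ snd q * cinner (h (fst p)) (F (ket_bra (snd p) (snd q)) (h (fst q))))"
proof -
  have "(\<Sum>i<k. \<Sum>j<k. cinner (h i) (F (M i j) (h j))) =
      (\<Sum>i<k. \<Sum>j<k. \<Sum>a\<in>UNIV. \<Sum>b\<in>UNIV. M i j $ a $ b * cinner (h i) (F (ket_bra a b) (h j)))"
    by (simp add: op_linear_eq_sum_ket_bra[OF assms, of "M _ _"] cinner_sum_right cinner_scaleC_right)
  also have "\<dots> = (\<Sum>i<k. \<Sum>a\<in>UNIV. \<Sum>j<k. \<Sum>b\<in>UNIV. M i j $ a $ b * cinner (h i) (F (ket_bra a b) (h j)))"
    by (intro sum.cong refl sum.swap)
  finally show ?thesis by (simp add: sum.cartesian_product')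
qed

lemma psd_on_block_matrix:
  fixes M :: "nat \<Rightarrow> nat \<Rightarrow> complex^'n^'n"
  assumes "\<forall>v :: nat \<Rightarrow> complex^'n. 0 \<le> (\<Sum>i<k. \<Sum>j<k. cinner (v i) (M i j *v v j))"
  shows "psd_on ({..<k} \<times> UNIV) (\<lambda>p q. M (fst p) (fst q) $ snd p $ snd q)"
  unfolding psd_on_def
proof
  fix v :: "nat \<times> 'n \<Rightarrow> complex"
  have "qform ({..<k} \<times> UNIV) (\<lambda>p q. M (fst p) (fst q) $ snd p $ snd q) v =
      (\<Sum>i<k. \<Sum>a\<in>UNIV. \<Sum>j<k. \<Sum>b\<in>UNIV. cnj (v (i,a)) * (M i j $ a $ b) * v (j,b))"
    unfolding qform_def by (simp add: sum.cartesian_product')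
  also have "\<dots> = (\<Sum>i<k. \<Sum>j<k. \<Sum>a\<in>UNIV. \<Sum>b\<in>UNIV. cnj (v (i,a)) * (M i j $ a $ b) * v (j,b))"
    by (intro sum.cong refl sum.swap)
  also have "\<dots> = (\<Sum>i<k. \<Sum>j<k. cinner (\<chi> a. v (i,a)) (M i j *v (\<chi> a. v (j,a))))"
    by (simp add: cinner_vec_sum matrix_vector_mult_def sum_distrib_left mult.assoc)
  finally show "0 \<le> qform ({..<k} \<times> UNIV) (\<lambda>p q. M (fst p) (fst q) $ snd p $ snd q) v"
    using assms by simp
qed

lemma cinner_choi_block_vector:
  fixes F :: "complex^'n^'n \<Rightarrow> 'a::complex_hilbert \<Rightarrow> 'a"
    and u :: "nat \<times> 'n \<Rightarrow> complex" and h :: "nat \<Rightarrow> 'a" and k :: nat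
  assumes "\<And>A. bounded_op (F A)"
  defines "y \<equiv> \<chi> a. \<Sum>i<k. cnj (u (i,a)) *\<^sub>C h i"
  shows "cinner y (choi F y) = complex_of_nat CARD('n) *
    (\<Sum>p\<in>{..<k} \<times> UNIV. \<Sum>q\<in>{..<k} \<times> UNIV.
       u p * cinner (h (fst p)) (F (ket_bra (snd p) (snd q)) (h (fst q))) * cnj (u q))"
proof -
  define Z where "Z a b i j = u (i,a) * cinner (h i) (F (ket_bra a b) (h j)) * cnj (u (j,b))"
    for a b i j
  have "(\<Sum>a\<in>UNIV. \<Sum>b\<in>UNIV. cinner (y $ a) (F (ket_bra a b) (y $ b))) =
      (\<Sum>a\<in>UNIV. \<Sum>b\<in>UNIV. \<Sum>j<k. \<Sum>i<k. Z a b i j)"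
    unfolding y_def Z_def
    by (simp add: bounded_op_sum[OF assms(1)] bounded_op_scaleC_commute[OF assms(1)]
        cinner_sum_right cinner_sum_left cinner_scaleC_right cinner_scaleC_left
        sum_distrib_left algebra_simps)
  also have "\<dots> = (\<Sum>a\<in>UNIV. \<Sum>b\<in>UNIV. \<Sum>i<k. \<Sum>j<k. Z a b i j)"
    by (intro sum.cong refl sum.swap)
  also have "\<dots> = (\<Sum>a\<in>UNIV. \<Sum>i<k. \<Sum>b\<in>UNIV. \<Sum>j<k. Z a b i j)"
    by (intro sum.cong refl sum.swap)
  also have "\<dots> = (\<Sum>i<k. \<Sum>a\<in>UNIV. \<Sum>b\<in>UNIV. \<Sum>j<k. Z a b i j)"
    by (rule sum.swap)
  also have "\<dots> = (\<Sum>i<k. \<Sum>a\<in>UNIV. \<Sum>j<k. \<Sum>b\<in>UNIV. Z a b i j)"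
    by (intro sum.cong refl sum.swap)
  finally show ?thesis
    unfolding cinner_choi Z_def by (simp add: sum.cartesian_product')
qed

text \<open>The matrix of \<open>\<langle>h\<^sub>i, \<F>(|a\<rangle>\<langle>b|) h\<^sub>j\<rangle>\<close> is positive semidefinite, and pairing it entrywise with a
positive block matrix gives a nonnegative number by the Schur product theorem.\<close>

lemma completely_positive_if_choi_nonneg:
  fixes F :: "complex^'n^'n \<Rightarrow> 'a::complex_hilbert \<Rightarrow> 'a"
  assumes lin: "op_linear F" and pos: "\<forall>y. 0 \<le> cinner y (choi F y)"
  shows "completely_positive F"
  unfolding completely_positive_def
proof (intro allI impI)
  fix k :: nat and M :: "nat \<Rightarrow> nat \<Rightarrow> complex^'n^'n" and h :: "nat \<Rightarrow> 'a"
  assume "\<forall>v :: nat \<Rightarrow> complex^'n. 0 \<le> (\<Sum>i<k. \<Sum>j<k. cinner (v i) (M i j *v v j))"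
  then have "psd_on ({..<k} \<times> UNIV) (\<lambda>p q. M (fst p) (fst q) $ snd p $ snd q)"
    by (rule psd_on_block_matrix)
  moreover have "0 \<le> (\<Sum>p\<in>{..<k} \<times> UNIV. \<Sum>q\<in>{..<k} \<times> UNIV.
       u p * cinner (h (fst p)) (F (ket_bra (snd p) (snd q)) (h (fst q))) * cnj (u q))"
    for u :: "nat \<times> 'n \<Rightarrow> complex"
  proof -
    define y where "y = (\<chi> a. \<Sum>i<k. cnj (u (i,a)) *\<^sub>C h i)"
    have "0 \<le> cinner y (choi F y)" using pos by blast
    also have "cinner y (choi F y) = complex_of_nat CARD('n) *
      (\<Sum>p\<in>{..<k} \<times> UNIV. \<Sum>q\<in>{..<k} \<times> UNIV.
         u p * cinner (h (fst p)) (F (ket_bra (snd p) (snd q)) (h (fst q))) * cnj (u q))"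
      unfolding y_def by (rule cinner_choi_block_vector) (use lin in \<open>simp add: op_linear_def\<close>)
    finally show ?thesis by (simp add: less_eq_complex_def zero_le_mult_iff)
  qed
  ultimately show "0 \<le> (\<Sum>i<k. \<Sum>j<k. cinner (h i) (F (M i j) (h j)))"
    unfolding sum_cinner_op_linear_block[OF lin] by (intro sum_psd_mult_nonneg) auto
qed

section \<open>Coercive operators\<close>

definition coercive :: "('a::complex_hilbert \<Rightarrow> 'a) \<Rightarrow> bool" where
  "coercive T \<longleftrightarrow> (\<exists>c>0. \<forall>x. c * (norm x)\<^sup>2 \<le> Re (cinner x (T x)))"

lemma norm_sub_scaleC_le_if_coercive:
  fixes T :: "'a::complex_hilbert \<Rightarrow> 'a"
  assumes c: "0 < c" "c < K"
    and bound: "\<forall>x. norm (T x) \<le> norm x * K"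
    and co: "\<forall>x. c * (norm x)\<^sup>2 \<le> Re (cinner x (T x))"
  shows "norm (w - complex_of_real (c / K\<^sup>2) *\<^sub>C T w) \<le> sqrt (1 - c\<^sup>2 / K\<^sup>2) * norm w"
proof -
  define \<epsilon> where "\<epsilon> = c / K\<^sup>2"
  define q where "q = 1 - c\<^sup>2 / K\<^sup>2"
  have "c\<^sup>2 < K\<^sup>2" using c by (simp add: power_strict_mono)
  then have q0: "0 \<le> q" unfolding q_def using c by (simp add: field_simps)
  have "(norm (w - complex_of_real \<epsilon> *\<^sub>C T w))\<^sup>2 =
     Re (cinner (w - complex_of_real \<epsilon> *\<^sub>C T w) (w - complex_of_real \<epsilon> *\<^sub>C T w))"
    by (rule Re_cinner_self[symmetric])
  also have "\<dots> = Re (cinner w w) - 2 * \<epsilon> * Re (cinner w (T w)) + \<epsilon>\<^sup>2 * Re (cinner (T w) (T w))"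
    by (simp add: cinner_diff_left cinner_diff_right cinner_scaleC_left cinner_scaleC_right
        Re_cinner_commute[of "T w" w] power2_eq_square algebra_simps)
  also have "\<dots> = (norm w)\<^sup>2 - 2 * \<epsilon> * Re (cinner w (T w)) + \<epsilon>\<^sup>2 * (norm (T w))\<^sup>2"
    by (simp add: Re_cinner_self)
  also have "\<dots> \<le> (norm w)\<^sup>2 - 2 * \<epsilon> * (c * (norm w)\<^sup>2) + \<epsilon>\<^sup>2 * (norm w * K)\<^sup>2"
  proof -
    have "\<epsilon> > 0" unfolding \<epsilon>_def using c by simp
    then have "2 * \<epsilon> * (c * (norm w)\<^sup>2) \<le> 2 * \<epsilon> * Re (cinner w (T w))"
      using co by (simp add: mult_left_mono)
    moreover have "(norm (T w))\<^sup>2 \<le> (norm w * K)\<^sup>2"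
      using bound by (simp add: power_mono)
    then have "\<epsilon>\<^sup>2 * (norm (T w))\<^sup>2 \<le> \<epsilon>\<^sup>2 * (norm w * K)\<^sup>2"
      by (simp add: mult_left_mono)
    ultimately show ?thesis by linarith
  qed
  also have "\<dots> = q * (norm w)\<^sup>2"
    unfolding \<epsilon>_def q_def using c by (simp add: field_simps power2_eq_square)
  also have "\<dots> = (sqrt q * norm w)\<^sup>2" using q0 by (simp add: power_mult_distrib)
  finally show ?thesis
    unfolding \<epsilon>_def q_def[symmetric] by (rule power2_le_imp_le) (use q0 in simp)
qed

text \<open>Lax--Milgram: for small \<open>\<epsilon>\<close>, \<open>x \<mapsto> x + \<epsilon> (y - T x)\<close> is a contraction whose fixed
point solves \<open>T x = y\<close>.\<close>

lemma coercive_surj: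
  fixes T :: "'a::complex_hilbert \<Rightarrow> 'a"
  assumes "bounded_linear T" "coercive T"
  shows "\<exists>x. T x = y"
proof -
  obtain c where c: "c > 0" and co: "\<forall>x. c * (norm x)\<^sup>2 \<le> Re (cinner x (T x))"
    using assms(2) unfolding coercive_def by blast
  obtain K0 where K0: "K0 > 0" "\<forall>x. norm (T x) \<le> norm x * K0"
    using bounded_linear.pos_bounded[OF assms(1)] by blast
  define K where "K = K0 + c"
  have bound: "\<forall>x. norm (T x) \<le> norm x * K"
    unfolding K_def using K0 c
    by (metis add_increasing2 distrib_left less_eq_real_def norm_ge_zero zero_le_mult_iff)
  define q where "q = sqrt (1 - c\<^sup>2 / K\<^sup>2)"
  have "c < K" "c\<^sup>2 < K\<^sup>2" unfolding K_def using K0 c by (auto simp: power_strict_mono)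
  then have q: "0 \<le> q" "q < 1" unfolding q_def using c by (auto simp: field_simps)
  define \<Phi> where "\<Phi> x = x + complex_of_real (c / K\<^sup>2) *\<^sub>C (y - T x)" for x
  have "dist (\<Phi> x) (\<Phi> z) \<le> q * dist x z" for x z
  proof -
    have "\<Phi> x - \<Phi> z = (x - z) - complex_of_real (c / K\<^sup>2) *\<^sub>C T (x - z)"
      unfolding \<Phi>_def
      by (simp add: linear_diff[OF bounded_linear.linear[OF assms(1)]] scaleC_diff_right
          algebra_simps)
    then show ?thesis
      using norm_sub_scaleC_le_if_coercive[OF c \<open>c < K\<close> bound co, of "x - z"]
      by (simp add: dist_norm q_def)
  qed
  then obtain x where "\<Phi> x = x"
    using banach_fix_type[of q \<Phi>] q by auto
  then have "complex_of_real (c / K\<^sup>2) *\<^sub>C (y - T x) = 0" unfolding \<Phi>_def by simp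
  then have "y - T x = 0" by (rule scaleC_eq_0_imp) (use c \<open>c < K\<close> in simp)
  then show ?thesis by auto
qed

lemma coercive_inj:
  fixes T :: "'a::complex_hilbert \<Rightarrow> 'a"
  assumes "bounded_linear T" "coercive T" "T x = T z"
  shows "x = z"
proof -
  obtain c where c: "c > 0" and co: "\<forall>x. c * (norm x)\<^sup>2 \<le> Re (cinner x (T x))"
    using assms(2) unfolding coercive_def by blast
  have "T (x - z) = 0"
    using assms(3) linear_diff[OF bounded_linear.linear[OF assms(1)]] by simp
  then have "c * (norm (x - z))\<^sup>2 \<le> 0" using co[rule_format, of "x - z"] by simp
  then show ?thesis using c by (simp add: mult_le_0_iff)
qed

lemma zero_notin_op_spectrum_if_coercive:
  fixes T :: "'a::complex_hilbert \<Rightarrow> 'a"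
  assumes bop: "bounded_op T" and "coercive T"
  shows "0 \<notin> op_spectrum T"
proof -
  obtain c where c: "c > 0" and co: "\<forall>x. c * (norm x)\<^sup>2 \<le> Re (cinner x (T x))"
    using assms(2) unfolding coercive_def by blast
  have bl: "bounded_linear T" using bop by (simp add: bounded_op_def)
  have inj: "\<And>x z. T x = T z \<Longrightarrow> x = z" using coercive_inj[OF bl assms(2)] by blast
  define S where "S y = (THE x. T x = y)" for y
  have TS: "T (S y) = y" for y
  proof -
    have "\<exists>!x. T x = y" using coercive_surj[OF bl assms(2)] inj by blast
    then show ?thesis unfolding S_def by (rule theI')
  qed
  have ST: "S (T x) = x" for x using TS[of "T x"] inj by blast
  have Sbound: "norm (S y) \<le> norm y * (1 / c)" for y
  proof -
    have "c * (norm (S y))\<^sup>2 \<le> Re (cinner (S y) y)" using co[rule_format, of "S y"] by (simp add: TS)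
    also have "\<dots> \<le> norm (S y) * norm y" by (rule Re_cinner_le_norm_mult)
    finally have "c * (norm (S y))\<^sup>2 \<le> norm (S y) * norm y" .
    then have "S y \<noteq> 0 \<Longrightarrow> c * norm (S y) \<le> norm y" by (simp add: power2_eq_square)
    then show ?thesis using c by (cases "S y = 0") (simp_all add: field_simps)
  qed
  have SC: "S (a *\<^sub>C b) = a *\<^sub>C S b" for a b
    by (rule inj) (simp add: TS bounded_op_scaleC_commute[OF bop])
  have "bounded_linear S"
  proof (rule bounded_linear_intro[where K="1/c"])
    show "S (a + b) = S a + S b" for a b
      by (rule inj) (simp add: TS linear_add[OF bounded_linear.linear[OF bl]])
    show "S (r *\<^sub>R b) = r *\<^sub>R S b" for r b
      using SC[of "complex_of_real r" b] by (simp add: scaleC_of_real)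
  qed (rule Sbound)
  then have "bounded_op S" using SC by (simp add: bounded_op_def)
  then show ?thesis unfolding op_spectrum_def using ST TS by auto
qed

lemma cinner_op_hermitian_if_pos:
  fixes T :: "'a::complex_hilbert \<Rightarrow> 'a"
  assumes bop: "bounded_op T" and pos: "\<forall>x. 0 \<le> cinner x (T x)"
  shows "cinner y (T x) = cnj (cinner x (T y))"
proof -
  have lin: "linear T" using bop by (simp add: bounded_op_def bounded_linear.linear)
  have im0: "Im (cinner z (T z)) = 0" for z using pos by (auto simp: less_eq_complex_def)
  have "cinner (x + y) (T (x + y)) = cinner x (T x) + cinner x (T y) + cinner y (T x) + cinner y (T y)"
    by (simp add: linear_add[OF lin] cinner_add_left cinner_add_right)
  then have "Im (cinner x (T y)) + Im (cinner y (T x)) = 0"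
    using im0[of "x + y"] im0[of x] im0[of y] by simp
  moreover have "cinner (x + \<i> *\<^sub>C y) (T (x + \<i> *\<^sub>C y)) =
      cinner x (T x) + \<i> * cinner x (T y) - \<i> * cinner y (T x) + cinner y (T y)"
    by (simp add: linear_add[OF lin] bounded_op_scaleC_commute[OF bop] cinner_add_left
        cinner_add_right cinner_scaleC_left cinner_scaleC_right algebra_simps)
  then have "Re (cinner x (T y)) - Re (cinner y (T x)) = 0"
    using im0[of "x + \<i> *\<^sub>C y"] im0[of x] im0[of y] by simp
  ultimately show ?thesis by (simp add: complex_eq_iff)
qed

text \<open>Positivity of the form at \<open>x - T x / K\<close>, using that \<open>T\<close> is Hermitian.\<close>

lemma norm_op_square_le_pos_form:
  fixes T :: "'a::complex_hilbert \<Rightarrow> 'a"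
  assumes bop: "bounded_op T" and pos: "\<forall>x. 0 \<le> cinner x (T x)"
    and K: "K > 0" "\<forall>x. norm (T x) \<le> norm x * K"
  shows "(norm (T x))\<^sup>2 / K \<le> Re (cinner x (T x))"
proof -
  have lin: "linear T" using bop by (simp add: bounded_op_def bounded_linear.linear)
  define s where "s = 1 / K"
  define n where "n = (norm (T x))\<^sup>2"
  have h1: "cinner x (T (T x)) = complex_of_real n"
    using cinner_op_hermitian_if_pos[OF bop pos, of x "T x"] by (simp add: cinner_self n_def)
  have h2: "cinner (T x) (T x) = complex_of_real n" by (simp add: cinner_self n_def)
  have h3: "Re (cinner (T x) (T (T x))) \<le> K * n"
  proof -
    have "Re (cinner (T x) (T (T x))) \<le> norm (T x) * norm (T (T x))"
      by (rule Re_cinner_le_norm_mult)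
    also have "\<dots> \<le> norm (T x) * (norm (T x) * K)" using K by (simp add: mult_left_mono)
    finally show ?thesis by (simp add: n_def power2_eq_square algebra_simps)
  qed
  have "0 \<le> Re (cinner (x - complex_of_real s *\<^sub>C T x) (T (x - complex_of_real s *\<^sub>C T x)))"
    using pos by (simp add: less_eq_complex_def)
  also have "\<dots> = Re (cinner x (T x)) - 2 * s * n + s\<^sup>2 * Re (cinner (T x) (T (T x)))"
    by (simp add: linear_diff[OF lin] bounded_op_scaleC_commute[OF bop] cinner_diff_left
        cinner_diff_right cinner_scaleC_left cinner_scaleC_right h1 h2 power2_eq_square
        algebra_simps)
  also have "\<dots> \<le> Re (cinner x (T x)) - 2 * s * n + s\<^sup>2 * (K * n)"
    using h3 by (simp add: mult_left_mono)
  also have "\<dots> = Re (cinner x (T x)) - n / K"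
    unfolding s_def using K by (simp add: field_simps power2_eq_square)
  finally show ?thesis unfolding n_def by simp
qed

lemma coercive_if_zero_notin_op_spectrum:
  fixes T :: "'a::complex_hilbert \<Rightarrow> 'a"
  assumes bop: "bounded_op T" and pos: "\<forall>x. 0 \<le> cinner x (T x)"
    and "0 \<notin> op_spectrum T"
  shows "coercive T"
proof -
  obtain S where "bounded_op S" and ST: "\<And>x. S (T x) = x"
    using assms(3) unfolding op_spectrum_def by auto
  then obtain KS where KS: "KS > 0" "\<forall>x. norm (S x) \<le> norm x * KS"
    using bounded_linear.pos_bounded[of S] by (auto simp: bounded_op_def)
  obtain K where K: "K > 0" "\<forall>x. norm (T x) \<le> norm x * K"
    using bounded_linear.pos_bounded[of T] bop by (auto simp: bounded_op_def)
  have "1 / (K * KS\<^sup>2) * (norm x)\<^sup>2 \<le> Re (cinner x (T x))" for x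
  proof -
    have "norm x \<le> norm (T x) * KS" using KS ST[of x] by metis
    then have "(norm x)\<^sup>2 \<le> (norm (T x) * KS)\<^sup>2" by (simp add: power_mono)
    then have "1 / (K * KS\<^sup>2) * (norm x)\<^sup>2 \<le> (norm (T x))\<^sup>2 / K"
      using K KS by (simp add: field_simps power_mult_distrib)
    also have "\<dots> \<le> Re (cinner x (T x))" by (rule norm_op_square_le_pos_form[OF bop pos K])
    finally show ?thesis .
  qed
  moreover have "1 / (K * KS\<^sup>2) > 0" using K KS by simp
  ultimately show ?thesis unfolding coercive_def by blast
qed

lemma choi_nonneg_if_channel: "F \<in> channels \<Longrightarrow> 0 \<le> cinner y (choi F y)"
  by (simp add: channels_def choi_nonneg_if_completely_positive)

definition map_lincomb :: "complex \<Rightarrow> complex \<Rightarrow> (complex^'n^'n \<Rightarrow> 'a::complex_hilbert \<Rightarrow> 'a)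
   \<Rightarrow> (complex^'n^'n \<Rightarrow> 'a \<Rightarrow> 'a) \<Rightarrow> (complex^'n^'n \<Rightarrow> 'a \<Rightarrow> 'a)" where
  "map_lincomb a b F G = (\<lambda>A x. a *\<^sub>C F A x + b *\<^sub>C G A x)"

lemma chan_comb_eq_map_lincomb:
  "chan_comb t F G = map_lincomb (complex_of_real t) (complex_of_real (1 - t)) F G"
  by (simp add: chan_comb_def map_lincomb_def)

lemma op_linear_map_lincomb:
  fixes F G :: "complex^'n^'n \<Rightarrow> 'a::complex_hilbert \<Rightarrow> 'a"
  assumes "op_linear F" "op_linear G"
  shows "op_linear (map_lincomb a b F G)"
  unfolding op_linear_def
proof (intro conjI allI)
  fix A B :: "complex^'n^'n"
  show "map_lincomb a b F G (A + B) = (\<lambda>x. map_lincomb a b F G A x + map_lincomb a b F G B x)"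
    using assms by (simp add: op_linear_def map_lincomb_def scaleC_add_right fun_eq_iff algebra_simps)
next
  fix c and A :: "complex^'n^'n"
  show "map_lincomb a b F G (c *\<^sub>C A) = (\<lambda>x. c *\<^sub>C map_lincomb a b F G A x)"
    using assms
    by (simp add: op_linear_def map_lincomb_def scaleC_add_right scaleC_scaleC fun_eq_iff mult.commute)
next
  fix A :: "complex^'n^'n"
  show "bounded_op (map_lincomb a b F G A)"
    unfolding map_lincomb_def using assms by (intro bounded_op_lincomb) (auto simp: op_linear_def)
qed

lemma cinner_choi_map_lincomb:
  fixes F G :: "complex^'n^'n \<Rightarrow> 'a::complex_hilbert \<Rightarrow> 'a"
  shows "cinner y (choi (map_lincomb a b F G) y) = a * cinner y (choi F y) + b * cinner y (choi G y)"
  unfolding cinner_choi map_lincomb_def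
  by (simp add: cinner_add_right cinner_scaleC_right sum.distrib sum_distrib_left algebra_simps)

lemma map_lincomb_channel:
  fixes F G :: "complex^'n^'n \<Rightarrow> 'a::complex_hilbert \<Rightarrow> 'a"
  assumes "F \<in> channels" "G \<in> channels" "a + b = 1"
    and "\<forall>y. 0 \<le> cinner y (choi (map_lincomb a b F G) y)"
  shows "map_lincomb a b F G \<in> channels"
proof -
  have lin: "op_linear (map_lincomb a b F G)"
    using assms(1,2) by (intro op_linear_map_lincomb channels_op_linear)
  moreover have "map_lincomb a b F G (mat 1) = (\<lambda>x. x)"
    using assms(1-3) unfolding channels_def map_lincomb_def
    by (simp add: fun_eq_iff scaleC_add_left[symmetric] scaleC_one)
  ultimately show ?thesis
    using completely_positive_if_choi_nonneg[OF lin assms(4)] by (simp add: channels_iff)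
qed

definition depolarizing :: "complex^'n^'n \<Rightarrow> 'a::complex_hilbert \<Rightarrow> 'a" where
  "depolarizing A x = ((\<Sum>a\<in>UNIV. A$a$a) / complex_of_nat CARD('n)) *\<^sub>C x"

lemma op_linear_depolarizing: "op_linear (depolarizing :: complex^'n^'n \<Rightarrow> 'a::complex_hilbert \<Rightarrow> 'a)"
  unfolding op_linear_def
proof (intro conjI allI)
  fix A B :: "complex^'n^'n"
  show "(depolarizing (A + B) :: 'a \<Rightarrow> 'a) = (\<lambda>x. depolarizing A x + depolarizing B x)"
    by (simp add: depolarizing_def fun_eq_iff sum.distrib add_divide_distrib scaleC_add_left)
next
  fix c and A :: "complex^'n^'n"
  have "(\<Sum>a\<in>UNIV. (c *\<^sub>C A) $ a $ a) = c * (\<Sum>a\<in>UNIV. A $ a $ a)"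
    by (simp add: sum_distrib_left)
  then show "(depolarizing (c *\<^sub>C A) :: 'a \<Rightarrow> 'a) = (\<lambda>x. c *\<^sub>C depolarizing A x)"
    by (simp add: depolarizing_def fun_eq_iff scaleC_scaleC)
next
  fix A :: "complex^'n^'n"
  show "bounded_op (depolarizing A :: 'a \<Rightarrow> 'a)"
    unfolding depolarizing_def by (rule bounded_op_scaleC)
qed

lemma choi_depolarizing: "choi (depolarizing :: complex^'n^'n \<Rightarrow> 'a::complex_hilbert \<Rightarrow> 'a) y = y"
proof -
  have trace: "(\<Sum>a\<in>UNIV. ket_bra m n $ a $ a) = (if m = n then 1 else (0::complex))" for m n :: 'n
    by (cases "m = n") (auto intro: sum.neutral)
  have "choi (depolarizing :: complex^'n^'n \<Rightarrow> 'a \<Rightarrow> 'a) y $ m =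
      complex_of_nat CARD('n) *\<^sub>C (\<Sum>n\<in>UNIV. ((if m = n then 1 else 0) / complex_of_nat CARD('n)) *\<^sub>C y $ n)"
    for m
    unfolding choi_def depolarizing_def by (simp del: ket_bra_nth add: trace)
  also have "\<dots> m = complex_of_nat CARD('n) *\<^sub>C ((1 / complex_of_nat CARD('n)) *\<^sub>C y $ m)" for m
    by (simp add: if_distrib[of "\<lambda>z. (z / _) *\<^sub>C _"] cong: if_cong)
  also have "\<dots> m = y $ m" for m
    by (simp add: scaleC_scaleC scaleC_one)
  finally show ?thesis by (simp add: vec_eq_iff)
qed

lemma depolarizing_channel: "(depolarizing :: complex^'n^'n \<Rightarrow> 'a::complex_hilbert \<Rightarrow> 'a) \<in> channels"
proof -
  have "(depolarizing (mat 1) :: 'a \<Rightarrow> 'a) = (\<lambda>x. x)"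
    by (simp add: depolarizing_def mat_def fun_eq_iff scaleC_one)
  moreover have "completely_positive (depolarizing :: complex^'n^'n \<Rightarrow> 'a \<Rightarrow> 'a)"
    by (rule completely_positive_if_choi_nonneg[OF op_linear_depolarizing])
      (simp add: choi_depolarizing cinner_self less_eq_complex_def)
  ultimately show ?thesis using op_linear_depolarizing by (simp add: channels_iff)
qed

section \<open>The convex order on channels\<close>

text \<open>If \<open>t E(\<G>) \<le> E(\<F>)\<close>, then \<open>\<F> = t \<G> + (1 - t) \<Z>\<close> with \<open>\<Z> = (\<F> - t \<G>) / (1 - t)\<close>, and \<open>\<Z>\<close>
is a channel because its Choi operator is positive.\<close>

lemma conv_le_if_choi_dominates:
  fixes F G :: "complex^'n^'n \<Rightarrow> 'a::complex_hilbert \<Rightarrow> 'a"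
  assumes F: "F \<in> channels" and G: "G \<in> channels" and t: "0 < t" "t < 1"
    and dom: "\<forall>y. t * Re (cinner y (choi G y)) \<le> Re (cinner y (choi F y))"
  shows "conv_le channels G F"
proof -
  define \<alpha> where "\<alpha> = complex_of_real (1 / (1 - t))"
  define \<beta> where "\<beta> = complex_of_real (- t / (1 - t))"
  define Z where "Z = map_lincomb \<alpha> \<beta> F G"
  have "0 \<le> cinner y (choi Z y)" for y
  proof -
    have real: "z = complex_of_real (Re z)" if "0 \<le> z" for z :: complex
      using that by (simp add: less_eq_complex_def complex_eq_iff)
    define qF where "qF = Re (cinner y (choi F y))"
    define qG where "qG = Re (cinner y (choi G y))"
    have "cinner y (choi Z y) = complex_of_real (1 / (1 - t) * qF + (- t / (1 - t)) * qG)"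
      unfolding Z_def cinner_choi_map_lincomb \<alpha>_def \<beta>_def qF_def qG_def
      using real[OF choi_nonneg_if_channel[OF F]] real[OF choi_nonneg_if_channel[OF G]]
      by (metis of_real_add of_real_mult)
    also have "1 / (1 - t) * qF + (- t / (1 - t)) * qG = (qF - t * qG) / (1 - t)"
      using t by (simp add: diff_divide_distrib)
    finally show ?thesis
      using dom t unfolding qF_def qG_def by (simp add: less_eq_complex_def)
  qed
  moreover have "\<alpha> + \<beta> = 1" unfolding \<alpha>_def \<beta>_def using t
    by (simp add: field_simps flip: of_real_add)
  ultimately have "Z \<in> channels" unfolding Z_def using F G by (intro map_lincomb_channel) auto
  moreover have "F = chan_comb t G Z"
  proof (intro ext)
    fix A x
    have "complex_of_real (1 - t) * \<alpha> = 1" "complex_of_real (1 - t) * \<beta> = - complex_of_real t"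
      unfolding \<alpha>_def \<beta>_def using t by (simp_all flip: of_real_mult)
    then show "F A x = chan_comb t G Z A x"
      unfolding chan_comb_def Z_def map_lincomb_def
      by (simp add: scaleC_add_right scaleC_scaleC scaleC_minus_left scaleC_one)
  qed
  ultimately show ?thesis unfolding conv_le_def using t by force
qed

lemma conv_le_if_choi_coercive:
  fixes F G :: "complex^'n^'n \<Rightarrow> 'a::complex_hilbert \<Rightarrow> 'a"
  assumes F: "F \<in> channels" and G: "G \<in> channels" and "coercive (choi F)"
  shows "conv_le channels G F"
proof -
  obtain c where c: "c > 0" "\<forall>y. c * (norm y)\<^sup>2 \<le> Re (cinner y (choi F y))"
    using assms(3) unfolding coercive_def by blast
  obtain K where K: "K > 0" "\<forall>y. norm (choi G y) \<le> norm y * K"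
    using bounded_linear.pos_bounded[of "choi G"] bounded_op_choi[OF channels_op_linear[OF G]]
    by (auto simp: bounded_op_def)
  define t where "t = min (1/2) (c / K)"
  have t: "0 < t" "t < 1" "t * K \<le> c"
    unfolding t_def using c K by (auto simp: min_def field_simps)
  have "t * Re (cinner y (choi G y)) \<le> Re (cinner y (choi F y))" for y
  proof -
    have "Re (cinner y (choi G y)) \<le> norm y * norm (choi G y)" by (rule Re_cinner_le_norm_mult)
    also have "\<dots> \<le> norm y * (norm y * K)" using K by (simp add: mult_left_mono)
    finally have "t * Re (cinner y (choi G y)) \<le> t * (norm y * (norm y * K))"
      using t by (simp add: mult_left_mono)
    also have "\<dots> = (t * K) * (norm y)\<^sup>2" by (simp add: power2_eq_square algebra_simps)
    also have "\<dots> \<le> c * (norm y)\<^sup>2" using t by (simp add: mult_right_mono)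
    also have "\<dots> \<le> Re (cinner y (choi F y))" using c by blast
    finally show ?thesis .
  qed
  then show ?thesis using conv_le_if_choi_dominates[OF F G t(1,2)] by blast
qed

lemma choi_coercive_if_depolarizing_conv_le:
  fixes F :: "complex^'n^'n \<Rightarrow> 'a::complex_hilbert \<Rightarrow> 'a"
  assumes "conv_le channels depolarizing F"
  shows "coercive (choi F)"
proof -
  obtain Z t where Z: "Z \<in> channels" and t: "0 < t" "t \<le> 1"
    and F: "F = chan_comb t depolarizing Z"
    using assms unfolding conv_le_def by blast
  have "t * (norm y)\<^sup>2 \<le> Re (cinner y (choi F y))" for y
  proof -
    have "Re (cinner y (choi F y)) = t * (norm y)\<^sup>2 + (1 - t) * Re (cinner y (choi Z y))"
      unfolding F chan_comb_eq_map_lincomb cinner_choi_map_lincomb choi_depolarizing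
      by (simp add: cinner_self)
    moreover have "0 \<le> (1 - t) * Re (cinner y (choi Z y))"
      using choi_nonneg_if_channel[OF Z, of y] t by (simp add: less_eq_complex_def)
    ultimately show ?thesis by simp
  qed
  then show ?thesis unfolding coercive_def using t by blast
qed

theorem proposition14:
  fixes F :: "complex^'n^'n \<Rightarrow> 'a::complex_hilbert \<Rightarrow> 'a"
  assumes "separable_space (euclidean :: 'a topology)"
    and "F \<in> channels"
  shows "F \<in> conv_boundary channels \<longleftrightarrow> 0 \<in> op_spectrum (choi F)"
proof -
  have bop: "bounded_op (choi F)" using assms(2) by (intro bounded_op_choi channels_op_linear)
  have pos: "\<forall>y. 0 \<le> cinner y (choi F y)" using assms(2) by (simp add: choi_nonneg_if_channel)
  show ?thesis
  proof
    assume "F \<in> conv_boundary channels"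
    then obtain G where "G \<in> channels" "\<not> conv_le channels G F"
      unfolding conv_boundary_def by blast
    then show "0 \<in> op_spectrum (choi F)"
      using conv_le_if_choi_coercive[OF assms(2)] coercive_if_zero_notin_op_spectrum[OF bop pos]
      by blast
  next
    assume "0 \<in> op_spectrum (choi F)"
    then have "\<not> conv_le channels depolarizing F"
      using choi_coercive_if_depolarizing_conv_le zero_notin_op_spectrum_if_coercive[OF bop] by blast
    then show "F \<in> conv_boundary channels"
      unfolding conv_boundary_def using assms(2) depolarizing_channel by blast
  qed
qed

end
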